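(* Let $D$ be a non-zero square-free integer and $E: y^2=x^3+D$. Let $Q\in E(\mathbb{Q})$ with $2Q$ not the identity and $Q$ not the identity, and set $P=2Q$. Suppose that $B_Q$ is even, that $3\nmid C_Q$, and that $B_P$ is an $l$th power of an integer for some prime $l$. Then $|C_Q|$ and $2B_Q$ are both $l$th powers of integers.
   Context: For a point $R\in E(\mathbb{Q})$ different from the identity write $x(R)=A_R/B_R^2$, $y(R)=C_R/B_R^3$ with $A_R,B_R,C_R\in\mathbb{Z}$, $B_R>0$ and $\gcd(A_RC_R,B_R)=1$. *)

theory Defs
  imports Complex_Main "HOL-Computational_Algebra.Squarefree"
begin

text \<open>Affine rational points of E: y^2 = x^3 + D (the identity is the point at infinity).\<close>
definition on_curve :: "int \<Rightarrow> rat \<Rightarrow> rat \<Rightarrow> bool" where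
  "on_curve D x y \<longleftrightarrow> y^2 = x^3 + of_int D"

text \<open>Doubling of an affine point (x,y) with y \<noteq> 0 on y^2 = x^3 + D (tangent slope 3x^2/(2y)).\<close>
definition dbl_x :: "rat \<Rightarrow> rat \<Rightarrow> rat" where
  "dbl_x x y = (3 * x^2 / (2 * y))^2 - 2 * x"

definition dbl_y :: "rat \<Rightarrow> rat \<Rightarrow> rat" where
  "dbl_y x y = (3 * x^2 / (2 * y)) * (x - dbl_x x y) - y"

definition is_rep :: "rat \<Rightarrow> rat \<Rightarrow> int \<Rightarrow> int \<Rightarrow> int \<Rightarrow> bool" where
  "is_rep x y A B C \<longleftrightarrow> x = of_int A / of_int (B^2) \<and> y = of_int C / of_int (B^3)
     \<and> B > 0 \<and> gcd (A * C) B = 1"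

end

theory Submission
  imports Defs "HOL-Computational_Algebra.Nth_Powers"
begin

(* Write Q = (A/B^2, C/B^3) in normalized form.  The doubling formula gives
     x(2Q) = A (9A^3 - 8C^2) / (2BC)^2.
   Using the curve equation C^2 = A^3 + D B^6, the square-freeness of D, the parity of B and
   3 not dividing C, the numerator A (9A^3 - 8C^2) is coprime to the denominator 2BC, so the
   fraction is already reduced and the normalized denominator of P = 2Q is B_P = 2 B |C|.
   Since 2B and |C| are positive and coprime, B_P being an l-th power forces both factors
   to be l-th powers. *)

lemma coprime_factor_of_power:
  fixes a b m :: int and l :: nat
  assumes "a > 0" "b > 0" "coprime a b" "a * b = m ^ l"
  shows "\<exists>u::int. a = u ^ l"
proof -
  have "nat a * nat b = nat \<bar>m\<bar> ^ l"
    using assms by (metis abs_mult abs_of_pos nat_mult_distrib nat_power_eq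
        order_less_imp_le power_abs abs_ge_zero)
  hence "is_nth_power l (nat a * nat b)" by auto
  moreover have "coprime (nat a) (nat b)"
    using assms by (metis abs_of_pos coprime_nat_abs_left_iff coprime_nat_abs_right_iff
        nat_0_le order_less_imp_le)
  ultimately have "is_nth_power l (nat a)"
    using is_nth_power_mult_coprime_natD(1) assms by auto
  then obtain u where "nat a = u ^ l" by (auto elim: is_nth_powerE)
  hence "a = int u ^ l" using assms by (metis int_nat_eq of_nat_power order_less_imp_le)
  thus ?thesis by blast
qed

lemma reduced_square_denominator_unique:
  fixes a b n m :: int
  assumes "coprime a b" "coprime n m" "b > 0" "m \<noteq> 0"
    and "(of_int a / of_int (b^2) :: rat) = of_int n / of_int (m^2)"
  shows "b = \<bar>m\<bar>"
proof -
  have "(of_int (a * m^2) :: rat) = of_int (n * b^2)"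
    using assms(3-5) by (simp add: field_simps)
  hence eq: "a * m^2 = n * b^2" by (simp only: of_int_eq_iff)
  have "b^2 dvd m^2"
  proof -
    have "b^2 dvd a * m^2" using eq by simp
    moreover have "coprime (b^2) a" using assms(1) by (simp add: coprime_commute)
    ultimately show ?thesis by (simp add: coprime_dvd_mult_right_iff)
  qed
  moreover have "m^2 dvd b^2"
  proof -
    have "m^2 dvd n * b^2" using eq by (metis dvd_triv_right)
    moreover have "coprime (m^2) n" using assms(2) by (simp add: coprime_commute)
    ultimately show ?thesis by (simp add: coprime_dvd_mult_right_iff)
  qed
  ultimately have "b^2 = \<bar>m\<bar>^2" by (simp add: zdvd_antisym_nonneg)
  thus ?thesis using assms(3) power2_eq_iff_nonneg[of b "\<bar>m\<bar>"] by simp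
qed

lemma is_rep_coprime:
  assumes "is_rep x y A B C"
  shows "coprime A B" and "coprime C B"
  using assms unfolding is_rep_def
  by (simp_all add: coprime_iff_gcd_eq_1[symmetric] coprime_mult_left_iff)

lemma is_rep_even_denominator:
  assumes "is_rep x y A B C" and "even B"
  shows "odd A" and "odd C"
  using coprime_common_divisor[OF is_rep_coprime(1)[OF assms(1)] _ assms(2)]
    coprime_common_divisor[OF is_rep_coprime(2)[OF assms(1)] _ assms(2)] by auto

lemma rep_curve_equation:
  assumes "on_curve D x y" "is_rep x y A B C"
  shows "C^2 = A^3 + D * B^6"
proof -
  have B: "B > 0" and "(of_int C / of_int (B^3))^2 = (of_int A / of_int (B^2))^3 + (of_int D :: rat)"
    using assms unfolding on_curve_def is_rep_def by auto
  hence "(of_int (C^2) :: rat) = of_int (A^3 + D * B^6)"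
    by (simp add: field_simps power_divide flip: power_mult)
  thus ?thesis by (simp only: of_int_eq_iff)
qed

text \<open>For square-free D, the numerators A and C of a normalized point are coprime:
  a common factor g gives g^2 | D B^6 with g coprime to B.\<close>
lemma rep_numerators_coprime:
  fixes A B C D :: int
  assumes "squarefree D" "C^2 = A^3 + D * B^6" "coprime A B"
  shows "coprime A C"
proof -
  define g where "g = gcd A C"
  have "g^2 dvd C^2" "g^3 dvd A^3" unfolding g_def by (simp_all add: dvd_power_same)
  moreover have "g^2 dvd g^3" by (rule le_imp_power_dvd) simp
  ultimately have "g^2 dvd D * B^6"
    using assms(2) by (metis add_diff_cancel_left' dvd_diff dvd_trans)
  moreover have "coprime (g^2) (B^6)"
    using coprime_divisors[OF gcd_dvd1 dvd_refl assms(3), of C] unfolding g_def by simp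
  ultimately have "g^2 dvd D" by (simp add: coprime_dvd_mult_left_iff)
  hence "is_unit g" using assms(1) unfolding squarefree_def by blast
  thus ?thesis unfolding g_def by (simp add: coprime_iff_gcd_eq_1)
qed

lemma dbl_x_rep:
  assumes "is_rep x y A B C" "C \<noteq> 0"
  shows "dbl_x x y = of_int (A * (9 * A^3 - 8 * C^2)) / of_int ((2 * B * C)^2)"
  using assms unfolding is_rep_def dbl_x_def
  by (simp add: field_simps power2_eq_square power3_eq_cube)

lemma coprime_add_multiple_iff:
  fixes k m n :: int
  shows "coprime (k * m + n) m \<longleftrightarrow> coprime n m"
  by (metis coprime_iff_gcd_eq_1 gcd.commute gcd_add_mult)

text \<open>Under the hypotheses of the theorem the numerator of the duplication formula is coprime
  to its denominator 2BC: modulo B it is A^4 (by the curve equation), modulo C it is 9A^4,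
  and it is odd because A is.\<close>
lemma dbl_numerator_coprime:
  fixes A B C D :: int
  assumes curve: "C^2 = A^3 + D * B^6" and AB: "coprime A B" and AC: "coprime A C"
    and "odd A" and "\<not> 3 dvd C"
  shows "coprime (A * (9 * A^3 - 8 * C^2)) (2 * B * C)"
proof -
  have "9 * A^3 - 8 * C^2 = (-8 * D * B^5) * B + A^3" using curve by algebra
  hence modB: "coprime (9 * A^3 - 8 * C^2) B"
    using AB by (simp only: coprime_add_multiple_iff) simp
  have "coprime (3::int) C" using \<open>\<not> 3 dvd C\<close> by (simp add: prime_imp_coprime)
  hence "coprime ((3::int)^2) C" by (simp only: coprime_power_left_iff) simp
  hence "coprime (9 * A^3) C" using AC by simp
  moreover have "9 * A^3 - 8 * C^2 = (-8 * C) * C + 9 * A^3" by algebra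
  ultimately have modC: "coprime (9 * A^3 - 8 * C^2) C"
    by (simp only: coprime_add_multiple_iff)
  have mod2: "coprime (A * (9 * A^3 - 8 * C^2)) 2" using \<open>odd A\<close> by simp
  show ?thesis using mod2 modB modC AB AC by simp
qed

lemma dbl_denominator:
  assumes "squarefree D" "on_curve D x y" "y \<noteq> 0"
    and Q: "is_rep x y A B C" and P: "is_rep (dbl_x x y) (dbl_y x y) AP BP CP"
    and "even B" and "\<not> 3 dvd C"
  shows "BP = 2 * B * \<bar>C\<bar>"
proof -
  have B: "B > 0" and C: "C \<noteq> 0" using Q \<open>y \<noteq> 0\<close> unfolding is_rep_def by auto
  have AB: "coprime A B" using Q by (rule is_rep_coprime)
  have curve: "C^2 = A^3 + D * B^6" using assms(2) Q by (rule rep_curve_equation)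
  have "odd A" using Q \<open>even B\<close> by (rule is_rep_even_denominator)
  have reduced: "coprime (A * (9 * A^3 - 8 * C^2)) (2 * B * C)"
    using dbl_numerator_coprime[OF curve AB rep_numerators_coprime[OF assms(1) curve AB]]
      \<open>odd A\<close> \<open>\<not> 3 dvd C\<close> by blast
  have "coprime AP BP" using P by (rule is_rep_coprime)
  moreover have "BP > 0" and "dbl_x x y = of_int AP / of_int (BP^2)"
    using P unfolding is_rep_def by auto
  moreover have "2 * B * C \<noteq> 0" using B C by simp
  ultimately have "BP = \<bar>2 * B * C\<bar>"
    using reduced_square_denominator_unique[OF _ reduced] dbl_x_rep[OF Q C] by metis
  thus ?thesis using B by (simp add: abs_mult)
qed

theorem mainTheorem9:
  fixes D :: int and xQ yQ :: rat and AQ BQ CQ AP BP CP :: int and l :: nat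
  assumes "D \<noteq> 0" and "squarefree D"
    and "on_curve D xQ yQ"
    and "yQ \<noteq> 0"
    and "is_rep xQ yQ AQ BQ CQ"
    and "is_rep (dbl_x xQ yQ) (dbl_y xQ yQ) AP BP CP"
    and "even BQ" and "\<not> 3 dvd CQ"
    and "prime l" and "\<exists>m::int. BP = m ^ l"
  shows "(\<exists>m::int. \<bar>CQ\<bar> = m ^ l) \<and> (\<exists>m::int. 2 * BQ = m ^ l)"
proof -
  obtain m where m: "BP = m ^ l" using assms(10) by blast
  have BP: "BP = (2 * BQ) * \<bar>CQ\<bar>"
    using dbl_denominator[OF assms(2-6) assms(7,8)] by simp
  have pos: "2 * BQ > 0" "\<bar>CQ\<bar> > 0" using assms(4,5) unfolding is_rep_def by auto
  have "odd CQ" using assms(5,7) by (rule is_rep_even_denominator)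
  hence cop: "coprime (2 * BQ) \<bar>CQ\<bar>"
    using is_rep_coprime(2)[OF assms(5)] by (simp add: coprime_commute)
  show ?thesis
    using coprime_factor_of_power[OF pos cop, of m l]
      coprime_factor_of_power[of "\<bar>CQ\<bar>" "2 * BQ" m l] pos cop BP m
    by (auto simp: coprime_commute mult.commute)
qed

end
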